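(* Let $\mathrm{BS}$ be the Biggs-Smith graph and let $A=\{1a,\dots,17a\}$, $B=\{1b,\dots,17b\}$, $C$, $D$, $E$, $F$ be defined analogously, and $H_i=\{ia,ib,ic,id,ie,if\}$. The automorphisms of $\mathrm{BS}$ that preserve the partition of $V(\mathrm{BS})$ into $A,B,C,D,E,F$ (i.e. map each part onto a part) correspond to permutations of the sets $H_i$, $i\in[17]$. They are in bijective correspondence with the permutations of $[17]$ that can be written uniquely as a product $\alpha\phi_k$ of a dihedral permutation $\alpha\in D_{17}$ (acting on $[17]$ viewed as $\mathbb{Z}_{17}$ in cyclic order) and a permutation $\phi_k:i\mapsto ki \pmod{17}$ with $k\in\{1,2,4,8\}$ (where $0$ is written as $17$). The automorphism corresponding to $\alpha\phi_k$ maps each of $A,\dots,F$ to itself if $k=1$, interchanges $A$ with $B$ and $C$ with $D$ if $k=4$, and interchanges $E$ with $F$ (and $\{A,B\}$ with $\{C,D\}$) if $k=2$ or $k=8$.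
   Context: The Biggs-Smith graph $\mathrm{BS}$ is the cubic graph on the $102$ vertices $ia,ib,ic,id,ie,if$ for $i\in\{1,\dots,17\}$ (indices taken modulo 17, with $0$ written as $17$), whose edges are: $ie\,ia$, $ie\,ib$, $ie\,if$, $if\,ic$, $if\,id$ for each $i$; and $ia\,(i+1)a$, $ib\,(i+4)b$, $ic\,(i+2)c$, $id\,(i+8)d$ for each $i$. $D_{17}$ denotes the dihedral group of order 34 acting on $\mathbb{Z}_{17}$ by maps $i\mapsto \pm i+c$. *)

theory Defs
  imports Main "HOL-Library.Numeral_Type"
begin

text \<open>Vertex labels ia,...,if of the Biggs-Smith graph. The index i ranges over
  the ring Z_17, realised as the finite type 17 (residue 0 plays the role of 17).\<close>

datatype letter = La | Lb | Lc | Ld | Le | Lf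

type_synonym vert = "17 \<times> letter"

definition bs_edge :: "vert \<Rightarrow> vert \<Rightarrow> bool" where
  "bs_edge u v \<longleftrightarrow>
     (fst v = fst u \<and>
        ((snd u = Le \<and> snd v \<in> {La, Lb, Lf}) \<or> (snd u = Lf \<and> snd v \<in> {Lc, Ld})))
   \<or> (snd u = snd v \<and>
        ((snd u = La \<and> fst v = fst u + 1) \<or>
         (snd u = Lb \<and> fst v = fst u + 4) \<or>
         (snd u = Lc \<and> fst v = fst u + 2) \<or>
         (snd u = Ld \<and> fst v = fst u + 8)))"

definition bs_adj :: "vert \<Rightarrow> vert \<Rightarrow> bool" where
  "bs_adj u v \<longleftrightarrow> bs_edge u v \<or> bs_edge v u"

definition bs_aut :: "(vert \<Rightarrow> vert) \<Rightarrow> bool" where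
  "bs_aut \<sigma> \<longleftrightarrow> bij \<sigma> \<and> (\<forall>u v. bs_adj u v \<longleftrightarrow> bs_adj (\<sigma> u) (\<sigma> v))"

definition part :: "letter \<Rightarrow> vert set" where
  "part t = UNIV \<times> {t}"

definition H :: "17 \<Rightarrow> vert set" where
  "H i = {i} \<times> UNIV"

definition pp_aut :: "(vert \<Rightarrow> vert) \<Rightarrow> bool" where
  "pp_aut \<sigma> \<longleftrightarrow> bs_aut \<sigma> \<and> (\<forall>t. \<exists>s. \<sigma> ` part t = part s)"

definition hperm :: "(vert \<Rightarrow> vert) \<Rightarrow> (17 \<Rightarrow> 17)" where
  "hperm \<sigma> = (THE \<pi>. \<forall>i. \<sigma> ` H i = H (\<pi> i))"

definition D17 :: "(17 \<Rightarrow> 17) set" where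
  "D17 = {\<alpha>. \<exists>s c. (s = 1 \<or> s = -1) \<and> \<alpha> = (\<lambda>i. s * i + c)}"

definition phi :: "nat \<Rightarrow> 17 \<Rightarrow> 17" where
  "phi k = (\<lambda>i. of_nat k * i)"

definition Kset :: "nat set" where
  "Kset = {1, 2, 4, 8}"

definition DPhi :: "(17 \<Rightarrow> 17) set" where
  "DPhi = {\<alpha> \<circ> phi k | \<alpha> k. \<alpha> \<in> D17 \<and> k \<in> Kset}"

end

theory Submission
  imports Defs
begin

text \<open>
  A partition-preserving automorphism \<sigma> permutes the letters by some \<tau>. The only edges between
  different parts are the spokes ea, eb, ef, fc, fd, which join vertices with the same index and
  form a spanning tree of each H_i; hence \<sigma>(i, t) = (\<pi> i, \<tau> t). The cycle i ~ i + 1 on A is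
  mapped onto the cycle of the part \<tau>(A), whose step k lies in {1, 4, 2, 8}, so consecutive values
  of \<pi> differ by \<plusminus>k, and injectivity of \<pi> forces the sign to be constant: \<pi> i = \<plusminus>k i + c.
  Multiplication by \<plusminus>k permutes the steps \<plusminus>1, \<plusminus>4, \<plusminus>2, \<plusminus>8 of the cycles on A, B, C, D,
  which determines \<tau> on these letters, and the spokes then determine \<tau> on E and F. Conversely
  every such map is an automorphism, and since the eight multipliers \<plusminus>k are distinct modulo 17,
  the sign and k are determined by \<pi>.
\<close>

lemma bit1_induct_plus_one:
  fixes x :: "'a::finite bit1"
  assumes "P 0" and "\<And>i. P i \<Longrightarrow> P (i + 1)"
  shows "P x"
proof (induct x)
  case (of_int z)
  from \<open>0 \<le> z\<close> show ?case
  proof (induct z rule: int_ge_induct)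
    case base
    show ?case using assms(1) by simp
  next
    case (step i)
    then show ?case using assms(2)[of "of_int i"] by simp
  qed
qed

lemma two_neq_zero_bit1: "(2::'a::finite bit1) \<noteq> 0"
proof -
  have "0 < CARD('a)" by simp
  then have "2 < 1 + 2 * int CARD('a)" by linarith
  then show ?thesis by simp
qed

lemma inj_pm_steps_imp_affine:
  fixes \<pi> :: "'a::finite bit1 \<Rightarrow> 'a bit1"
  assumes inj: "inj \<pi>" and steps: "\<And>i. \<pi> (i + 1) - \<pi> i \<in> {s, - s}"
  shows "\<exists>e \<in> {1, -1}. \<exists>c. \<forall>i. \<pi> i = e * s * i + c"
proof -
  define d where "d i = \<pi> (i + 1) - \<pi> i" for i
  have d_pm: "d i \<in> {s, - s}" for i
    unfolding d_def by (rule steps)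
  have d_succ: "d (i + 1) = d i" for i
  proof (rule ccontr)
    \<comment> \<open>a change of sign between consecutive steps would give \<pi> (i + 2) = \<pi> i\<close>
    assume "d (i + 1) \<noteq> d i"
    with d_pm[of "i + 1"] d_pm[of i] have "d (i + 1) = - d i" by (elim insertE) auto
    then have "\<pi> (i + 1 + 1) - \<pi> (i + 1) = \<pi> i - \<pi> (i + 1)"
      unfolding d_def by simp
    then have "\<pi> (i + 1 + 1) = \<pi> i" by simp
    then have "i + 1 + 1 = i" by (rule injD[OF inj])
    then show False using two_neq_zero_bit1[where 'a = 'a] by (simp add: add.assoc)
  qed
  have d_const: "d i = d 0" for i
    by (induct i rule: bit1_induct_plus_one) (simp_all add: d_succ)
  define c where "c = \<pi> 0"
  have affine: "\<pi> i = d 0 * i + c" for i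
  proof (induct i rule: bit1_induct_plus_one)
    case (2 i)
    have "\<pi> (i + 1) = d 0 + \<pi> i" using d_const[of i] unfolding d_def by (simp add: algebra_simps)
    with 2 show ?case by (simp add: algebra_simps)
  qed (simp add: c_def)
  from d_pm[of 0] have "\<exists>e \<in> {1, -1}. \<forall>i. \<pi> i = e * s * i + c"
  proof (elim insertE)
    assume "d 0 = s"
    with affine show ?thesis by (intro bexI[of _ 1]) auto
  next
    assume "d 0 = - s"
    with affine show ?thesis by (intro bexI[of _ "-1"]) auto
  qed simp
  then show ?thesis by blast
qed

lemma dvd_one_mult_left_cancel:
  fixes m :: "'a::comm_ring_1"
  assumes "m dvd 1"
  shows "m * a = m * b \<longleftrightarrow> a = b"
proof
  obtain w where "1 = m * w" using assms by (rule dvdE)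
  assume "m * a = m * b"
  then have "w * m * a = w * m * b" by (simp add: mult.assoc)
  then show "a = b" using \<open>1 = m * w\<close> by (simp add: mult.commute)
qed simp

lemma bij_affine:
  fixes m :: "'a::comm_ring_1"
  assumes "m dvd 1"
  shows "bij (\<lambda>i. m * i + c)"
proof (rule bijI)
  show "inj (\<lambda>i. m * i + c)"
    by (rule injI) (simp add: dvd_one_mult_left_cancel[OF assms])
  obtain w where "1 = m * w" using assms by (rule dvdE)
  then have "m * (w * (j - c)) + c = j" for j by (simp add: mult.assoc[symmetric])
  then show "surj (\<lambda>i. m * i + c)" by (rule surjI)
qed

lemma affine_step_iff:
  fixes m :: "'a::comm_ring_1"
  assumes "m dvd 1" and "x \<in> {m * s, - (m * s)}"
  shows "(m * j + c = m * i + c + x \<or> m * i + c = m * j + c + x) \<longleftrightarrow> (j = i + s \<or> i = j + s)"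
  using assms(2)
proof
  assume "x = m * s"
  then show ?thesis
    by (simp add: distrib_left[symmetric] dvd_one_mult_left_cancel[OF assms(1)])
next
  assume "x \<in> {- (m * s)}"
  then have "(m * j + c = m * i + c + x \<longleftrightarrow> m * (j + s) = m * i)"
    "(m * i + c = m * j + c + x \<longleftrightarrow> m * (i + s) = m * j)"
    by (auto simp: algebra_simps)
  then show ?thesis by (auto simp: dvd_one_mult_left_cancel[OF assms(1)])
qed

lemma pm_eq_trans:
  fixes x :: "'a::ab_group_add"
  assumes "x \<in> {a, - a}" and "x \<in> {b, - b}"
  shows "a \<in> {b, - b}"
  using assms by (elim insertE emptyE) (auto simp: minus_equation_iff)

definition cyclic :: "letter \<Rightarrow> bool" where
  "cyclic t \<longleftrightarrow> t \<in> {La, Lb, Lc, Ld}"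

fun cycle_step :: "letter \<Rightarrow> 17" where
  "cycle_step La = 1" | "cycle_step Lb = 4" | "cycle_step Lc = 2" | "cycle_step Ld = 8"
| "cycle_step Le = 0" | "cycle_step Lf = 0"

definition letter_adj :: "letter \<Rightarrow> letter \<Rightarrow> bool" where
  "letter_adj t u \<longleftrightarrow>
     (t = Le \<and> u \<in> {La, Lb, Lf}) \<or> (t = Lf \<and> u \<in> {Lc, Ld})
   \<or> (u = Le \<and> t \<in> {La, Lb, Lf}) \<or> (u = Lf \<and> t \<in> {Lc, Ld})"

lemma letter_adj_irrefl [simp]: "\<not> letter_adj t t"
  by (cases t) (auto simp: letter_adj_def)

lemma bs_adj_iff:
  "bs_adj (i, t) (j, u) \<longleftrightarrow>
     (i = j \<and> letter_adj t u) \<or> (t = u \<and> cyclic t \<and> (j = i + cycle_step t \<or> i = j + cycle_step t))"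
  by (cases t; cases u) (auto simp: bs_adj_def bs_edge_def letter_adj_def cyclic_def)

lemma bs_adj_distinct_letters:
  "bs_adj (i, t) (j, u) \<Longrightarrow> t \<noteq> u \<Longrightarrow> i = j \<and> letter_adj t u"
  by (simp add: bs_adj_iff)

text \<open>
  Multiplication by k \<in> {1, 2, 4, 8} permutes the cycle steps \<plusminus>1, \<plusminus>4, \<plusminus>2, \<plusminus>8 of the
  parts A, B, C, D; letter_perm k is the induced permutation of the letters, extended to E and F
  so that the spokes are preserved.
\<close>
definition letter_perm :: "nat \<Rightarrow> letter \<Rightarrow> letter" where
  "letter_perm k t =
     (if k = 4 then (case t of La \<Rightarrow> Lb | Lb \<Rightarrow> La | Lc \<Rightarrow> Ld | Ld \<Rightarrow> Lc | Le \<Rightarrow> Le | Lf \<Rightarrow> Lf)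
      else if k = 2 then (case t of La \<Rightarrow> Lc | Lb \<Rightarrow> Ld | Lc \<Rightarrow> Lb | Ld \<Rightarrow> La | Le \<Rightarrow> Lf | Lf \<Rightarrow> Le)
      else if k = 8 then (case t of La \<Rightarrow> Ld | Lb \<Rightarrow> Lc | Lc \<Rightarrow> La | Ld \<Rightarrow> Lb | Le \<Rightarrow> Lf | Lf \<Rightarrow> Le)
      else t)"

lemma cyclic_letter_perm_iff: "cyclic (letter_perm k t) \<longleftrightarrow> cyclic t"
  by (cases t) (simp_all add: letter_perm_def cyclic_def)

lemma letter_adj_letter_perm_iff: "letter_adj (letter_perm k t) (letter_perm k u) \<longleftrightarrow> letter_adj t u"
  by (cases t; cases u) (simp_all add: letter_perm_def letter_adj_def)

lemma letter_perm_pow4: "letter_perm k (letter_perm k (letter_perm k (letter_perm k t))) = t"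
  by (cases t) (simp_all add: letter_perm_def)

lemma bij_letter_perm: "bij (letter_perm k)"
  by (rule o_bij[where g = "letter_perm k \<circ> letter_perm k \<circ> letter_perm k"])
    (simp_all add: fun_eq_iff letter_perm_pow4)

lemma cycle_step_letter_perm:
  assumes "e \<in> {1, -1}" and "k \<in> Kset" and "cyclic t"
  shows "e * of_nat k * cycle_step t \<in> {cycle_step (letter_perm k t), - cycle_step (letter_perm k t)}"
proof -
  have "of_nat k * cycle_step t \<in> {cycle_step (letter_perm k t), - cycle_step (letter_perm k t)}"
    using assms(2,3) by (cases t) (auto simp: Kset_def cyclic_def letter_perm_def)
  with assms(1) show ?thesis by auto
qed

lemma cycle_step_pm_inject:
  assumes "cyclic t" and "cyclic u" and "cycle_step t \<in> {cycle_step u, - cycle_step u}"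
  shows "t = u"
  using assms by (cases t; cases u) (simp_all add: cyclic_def)

lemma letter_perm_unique:
  assumes "inj \<tau>" and "k \<in> Kset" and cyclic: "\<And>t. cyclic t \<Longrightarrow> \<tau> t = letter_perm k t"
    and "letter_adj (\<tau> Le) (\<tau> La)"
  shows "\<tau> = letter_perm k"
proof
  fix t
  have on_cyclic: "\<tau> La = letter_perm k La" "\<tau> Lb = letter_perm k Lb"
    "\<tau> Lc = letter_perm k Lc" "\<tau> Ld = letter_perm k Ld"
    by (simp_all add: cyclic cyclic_def)
  have "\<tau> x \<noteq> \<tau> y" if "x \<noteq> y" for x y
    using that \<open>inj \<tau>\<close> by (auto dest: injD)
  then have "\<tau> Le \<notin> \<tau> ` {La, Lb, Lc, Ld, Lf}" "\<tau> Lf \<notin> \<tau> ` {La, Lb, Lc, Ld}"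
    by auto
  with \<open>k \<in> Kset\<close> \<open>letter_adj (\<tau> Le) (\<tau> La)\<close>
  have "\<tau> Le = letter_perm k Le \<and> \<tau> Lf = letter_perm k Lf"
    by (cases "\<tau> Le"; cases "\<tau> Lf") (auto simp: on_cyclic Kset_def letter_perm_def letter_adj_def)
  with on_cyclic show "\<tau> t = letter_perm k t" by (cases t) simp_all
qed

definition bs_map :: "17 \<Rightarrow> nat \<Rightarrow> 17 \<Rightarrow> vert \<Rightarrow> vert" where
  "bs_map e k c = map_prod (\<lambda>i. e * of_nat k * i + c) (letter_perm k)"

lemma multiplier_dvd_one:
  assumes "e \<in> {1, -1}" and "k \<in> Kset"
  shows "e * of_nat k dvd (1::17)"
proof -
  have "e dvd 1" using assms(1) by auto
  moreover have "of_nat k dvd (1::17)"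
  proof -
    have "(2::17) dvd 1" by (rule dvdI[where k = 9]) simp
    moreover have "(4::17) dvd 1" by (rule dvdI[where k = 13]) simp
    moreover have "(8::17) dvd 1" by (rule dvdI[where k = 15]) simp
    ultimately show ?thesis using assms(2) unfolding Kset_def by auto
  qed
  ultimately show ?thesis using mult_dvd_mono[of e 1 "of_nat k" 1] by simp
qed

lemma bij_bs_map:
  assumes "e \<in> {1, -1}" and "k \<in> Kset"
  shows "bij (bs_map e k c)"
  using bij_betw_map_prod[OF bij_affine[OF multiplier_dvd_one[OF assms]] bij_letter_perm]
  by (simp add: bs_map_def)

lemma bs_map_image_part:
  assumes "e \<in> {1, -1}" and "k \<in> Kset"
  shows "bs_map e k c ` part t = part (letter_perm k t)"
  unfolding bs_map_def part_def
  using bij_is_surj[OF bij_affine[OF multiplier_dvd_one[OF assms]]]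
  by (intro map_prod_surj_on) simp_all

lemma bs_map_image_H:
  "bs_map e k c ` H i = H (e * of_nat k * i + c)"
  unfolding bs_map_def H_def
  using bij_is_surj[OF bij_letter_perm]
  by (intro map_prod_surj_on) simp_all

lemma bs_map_adj_iff:
  assumes "e \<in> {1, -1}" and "k \<in> Kset"
  shows "bs_adj (bs_map e k c u) (bs_map e k c v) \<longleftrightarrow> bs_adj u v"
proof -
  define m where "m = e * of_nat k"
  have m_unit: "m dvd 1" unfolding m_def by (rule multiplier_dvd_one[OF assms])
  obtain i t where u: "u = (i, t)" by fastforce
  obtain j s where v: "v = (j, s)" by fastforce
  have "bs_adj (bs_map e k c u) (bs_map e k c v) \<longleftrightarrow>
     (m * i + c = m * j + c \<and> letter_adj (letter_perm k t) (letter_perm k s))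
     \<or> (letter_perm k t = letter_perm k s \<and> cyclic (letter_perm k t)
        \<and> (m * j + c = m * i + c + cycle_step (letter_perm k t)
           \<or> m * i + c = m * j + c + cycle_step (letter_perm k t)))"
    unfolding u v bs_map_def map_prod_simp bs_adj_iff m_def ..
  also have "\<dots> \<longleftrightarrow> (i = j \<and> letter_adj t s) \<or> (t = s \<and> cyclic t \<and> (j = i + cycle_step t \<or> i = j + cycle_step t))"
  proof -
    have "m * i + c = m * j + c \<longleftrightarrow> i = j" by (simp add: dvd_one_mult_left_cancel[OF m_unit])
    moreover have "letter_perm k t = letter_perm k s \<longleftrightarrow> t = s"
      using bij_letter_perm by (simp add: bij_is_inj inj_eq)
    moreover have "(m * j + c = m * i + c + cycle_step (letter_perm k t)
           \<or> m * i + c = m * j + c + cycle_step (letter_perm k t)) \<longleftrightarrow> (j = i + cycle_step t \<or> i = j + cycle_step t)"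
      if "cyclic t"
      using cycle_step_letter_perm[OF assms that] unfolding m_def[symmetric]
      by (intro affine_step_iff[OF m_unit]) auto
    ultimately show ?thesis by (auto simp: letter_adj_letter_perm_iff cyclic_letter_perm_iff)
  qed
  also have "\<dots> \<longleftrightarrow> bs_adj u v" by (simp add: u v bs_adj_iff)
  finally show ?thesis .
qed

lemma pp_aut_bs_map:
  assumes "e \<in> {1, -1}" and "k \<in> Kset"
  shows "pp_aut (bs_map e k c)"
  unfolding pp_aut_def bs_aut_def
  using bij_bs_map[OF assms] bs_map_adj_iff[OF assms] bs_map_image_part[OF assms] by blast

lemma pp_aut_product_form:
  assumes "pp_aut \<sigma>"
  obtains \<pi> \<tau> where "inj \<pi>" and "inj \<tau>" and "\<sigma> = map_prod \<pi> \<tau>"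
proof -
  have "inj \<sigma>" and adj: "\<And>u v. bs_adj u v \<Longrightarrow> bs_adj (\<sigma> u) (\<sigma> v)"
    and "\<forall>t. \<exists>s. \<sigma> ` part t = part s"
    using assms unfolding pp_aut_def bs_aut_def by (blast dest: bij_is_inj)+
  then obtain \<tau> where \<tau>: "\<And>t. \<sigma> ` part t = part (\<tau> t)" by metis
  have snd_\<sigma>: "snd (\<sigma> (i, t)) = \<tau> t" for i t
  proof -
    have "\<sigma> (i, t) \<in> \<sigma> ` part t" by (simp add: part_def)
    then have "\<sigma> (i, t) \<in> part (\<tau> t)" by (simp only: \<tau>)
    then show ?thesis by (simp add: part_def mem_Times_iff)
  qed
  have "inj \<tau>"
  proof (rule injI)
    fix t u
    assume "\<tau> t = \<tau> u"
    then have "\<sigma> ` part t = \<sigma> ` part u" by (simp add: \<tau>)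
    then have "part t = part u" using \<open>inj \<sigma>\<close> by (simp add: inj_image_eq_iff)
    then show "t = u" by (auto simp: part_def)
  qed
  \<comment> \<open>spokes are the only edges between different parts, so \<sigma> maps spokes to spokes\<close>
  have fst_eq: "fst (\<sigma> (i, t)) = fst (\<sigma> (i, u))" if "letter_adj t u" for i t u
  proof -
    have "t \<noteq> u" using that by auto
    then have "\<tau> t \<noteq> \<tau> u" using \<open>inj \<tau>\<close> by (simp add: inj_eq)
    moreover have "bs_adj (\<sigma> (i, t)) (\<sigma> (i, u))" using that by (intro adj) (simp add: bs_adj_iff)
    moreover have "\<sigma> (i, t) = (fst (\<sigma> (i, t)), \<tau> t)" "\<sigma> (i, u) = (fst (\<sigma> (i, u)), \<tau> u)"
      by (simp_all add: prod_eq_iff snd_\<sigma>)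
    ultimately show ?thesis using bs_adj_distinct_letters by metis
  qed
  define \<pi> where "\<pi> i = fst (\<sigma> (i, Le))" for i
  have fst_\<sigma>: "fst (\<sigma> (i, t)) = \<pi> i" for i t
  proof -
    have near_Le: "fst (\<sigma> (i, u)) = \<pi> i" if "letter_adj u Le" for u
      unfolding \<pi>_def using that by (rule fst_eq)
    have "fst (\<sigma> (i, u)) = \<pi> i" if "letter_adj u Lf" for u
      using fst_eq[OF that] near_Le[of Lf] by (simp add: letter_adj_def)
    with near_Le show ?thesis by (cases t) (simp_all add: letter_adj_def)
  qed
  have \<sigma>_eq: "\<sigma> = map_prod \<pi> \<tau>"
    by (simp add: fun_eq_iff split_paired_All prod_eq_iff fst_\<sigma> snd_\<sigma>)
  have "inj \<pi>"
  proof (rule injI)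
    fix i j
    assume "\<pi> i = \<pi> j"
    then have "\<sigma> (i, Le) = \<sigma> (j, Le)" by (simp add: \<sigma>_eq)
    then show "i = j" using \<open>inj \<sigma>\<close> by (simp add: inj_eq)
  qed
  with \<open>inj \<tau>\<close> \<sigma>_eq show thesis by (intro that)
qed

lemma map_prod_is_bs_map:
  fixes \<pi> :: "17 \<Rightarrow> 17"
  assumes "inj \<pi>" and "inj \<tau>"
    and adj: "\<And>u v. bs_adj u v \<Longrightarrow> bs_adj (map_prod \<pi> \<tau> u) (map_prod \<pi> \<tau> v)"
  obtains e k c where "e \<in> {1, -1}" and "k \<in> Kset" and "map_prod \<pi> \<tau> = bs_map e k c"
proof -
  have cycle_image: "cyclic (\<tau> t) \<and> \<pi> (i + cycle_step t) - \<pi> i \<in> {cycle_step (\<tau> t), - cycle_step (\<tau> t)}"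
    if "cyclic t" for t i
  proof -
    have "bs_adj (\<pi> i, \<tau> t) (\<pi> (i + cycle_step t), \<tau> t)"
      using adj[of "(i, t)" "(i + cycle_step t, t)"] that by (simp add: bs_adj_iff)
    then show ?thesis by (auto simp: bs_adj_iff)
  qed
  have "cyclic (\<tau> La)" using cycle_image[of La 0] by (simp add: cyclic_def)
  then have "\<exists>k \<in> Kset. of_nat k = cycle_step (\<tau> La)"
    by (cases "\<tau> La") (auto simp: cyclic_def Kset_def)
  then obtain k where k: "k \<in> Kset" "of_nat k = cycle_step (\<tau> La)" ..
  then have "\<pi> (i + 1) - \<pi> i \<in> {of_nat k, - of_nat k}" for i
    using cycle_image[of La i] by (simp add: cyclic_def)
  from inj_pm_steps_imp_affine[OF \<open>inj \<pi>\<close> this] obtain e c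
    where e: "e \<in> {1, -1}" and \<pi>: "\<And>i. \<pi> i = e * of_nat k * i + c"
    by blast
  have "\<tau> t = letter_perm k t" if "cyclic t" for t
  proof (rule cycle_step_pm_inject)
    have "e * of_nat k * cycle_step t \<in> {cycle_step (\<tau> t), - cycle_step (\<tau> t)}"
      using cycle_image[OF that, of 0] by (simp add: \<pi>)
    moreover have "e * of_nat k * cycle_step t \<in> {cycle_step (letter_perm k t), - cycle_step (letter_perm k t)}"
      using cycle_step_letter_perm[OF e k(1) that] .
    ultimately show "cycle_step (\<tau> t) \<in> {cycle_step (letter_perm k t), - cycle_step (letter_perm k t)}"
      by (rule pm_eq_trans)
  qed (use that cycle_image in \<open>simp_all add: cyclic_letter_perm_iff\<close>)
  moreover have "letter_adj (\<tau> Le) (\<tau> La)"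
  proof -
    have "bs_adj (\<pi> 0, \<tau> Le) (\<pi> 0, \<tau> La)"
      using adj[of "(0, Le)" "(0, La)"] by (simp add: bs_adj_iff letter_adj_def)
    moreover have "\<tau> Le \<noteq> \<tau> La" using \<open>inj \<tau>\<close> by (simp add: inj_eq)
    ultimately show ?thesis by (simp add: bs_adj_iff)
  qed
  ultimately have "\<tau> = letter_perm k" using letter_perm_unique[OF \<open>inj \<tau>\<close> k(1)] by blast
  then have "map_prod \<pi> \<tau> = bs_map e k c"
    by (simp add: bs_map_def fun_eq_iff \<pi>)
  with e k(1) show thesis by (rule that)
qed

lemma pp_aut_iff_bs_map:
  "pp_aut \<sigma> \<longleftrightarrow> (\<exists>e \<in> {1, -1}. \<exists>k \<in> Kset. \<exists>c. \<sigma> = bs_map e k c)"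
proof
  assume "pp_aut \<sigma>"
  then obtain \<pi> \<tau> where "inj \<pi>" "inj \<tau>" and \<sigma>: "\<sigma> = map_prod \<pi> \<tau>"
    by (rule pp_aut_product_form)
  have "bs_adj u v \<Longrightarrow> bs_adj (map_prod \<pi> \<tau> u) (map_prod \<pi> \<tau> v)" for u v
    using \<open>pp_aut \<sigma>\<close> unfolding \<sigma> pp_aut_def bs_aut_def by blast
  with \<open>inj \<pi>\<close> \<open>inj \<tau>\<close> obtain e k c where "e \<in> {1, -1}" "k \<in> Kset" "map_prod \<pi> \<tau> = bs_map e k c"
    by (rule map_prod_is_bs_map)
  with \<sigma> show "\<exists>e \<in> {1, -1}. \<exists>k \<in> Kset. \<exists>c. \<sigma> = bs_map e k c" by blast
qed (auto intro: pp_aut_bs_map)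

lemma H_inject: "H i = H j \<longleftrightarrow> i = j"
  by (auto simp: H_def)

lemma hperm_eqI:
  assumes "\<And>i. \<sigma> ` H i = H (\<pi> i)"
  shows "hperm \<sigma> = \<pi>"
  unfolding hperm_def
proof (rule the_equality)
  show "\<forall>i. \<sigma> ` H i = H (\<pi> i)" using assms ..
  fix \<pi>' assume "\<forall>i. \<sigma> ` H i = H (\<pi>' i)"
  then show "\<pi>' = \<pi>" by (simp add: fun_eq_iff assms H_inject)
qed

lemma hperm_bs_map: "hperm (bs_map e k c) = (\<lambda>i. e * of_nat k * i + c)"
  by (rule hperm_eqI) (rule bs_map_image_H)

lemma affine_params_inject:
  assumes "e \<in> {1, -1}" "k \<in> Kset" "e' \<in> {1, -1}" "k' \<in> Kset"
    and eq: "(\<lambda>i. e * of_nat k * i + c) = (\<lambda>i::17. e' * of_nat k' * i + c')"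
  shows "e = e' \<and> k = k' \<and> c = c'"
proof -
  have "c = c'" using fun_cong[OF eq, of 0] by simp
  moreover have "e * of_nat k = e' * of_nat k'" using fun_cong[OF eq, of 1] \<open>c = c'\<close> by simp
  then have "e = e' \<and> k = k'"
    using assms(1-4) unfolding Kset_def by (elim insertE emptyE) simp_all
  ultimately show ?thesis by blast
qed

lemma D17E:
  assumes "\<alpha> \<in> D17"
  obtains e c where "e \<in> {1, -1}" and "\<alpha> = (\<lambda>i. e * i + c)"
  using assms unfolding D17_def by blast

lemma D17I: "e \<in> {1, -1} \<Longrightarrow> (\<lambda>i. e * i + c) \<in> D17"
  unfolding D17_def by blast

lemma dihedral_comp_phi: "(\<lambda>i. e * i + c) \<circ> phi k = (\<lambda>i. e * of_nat k * i + c)"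
  by (simp add: phi_def fun_eq_iff mult.assoc)

lemma pp_aut_ex1_H_perm:
  assumes "pp_aut \<sigma>"
  shows "\<exists>!\<pi>. bij \<pi> \<and> (\<forall>i. \<sigma> ` H i = H (\<pi> i))"
proof -
  from assms obtain e k c where params: "e \<in> {1, -1}" "k \<in> Kset" and \<sigma>: "\<sigma> = bs_map e k c"
    unfolding pp_aut_iff_bs_map by blast
  show ?thesis
  proof (rule ex1I[where a = "\<lambda>i. e * of_nat k * i + c"], intro conjI allI)
    show "bij (\<lambda>i. e * of_nat k * i + c)"
      by (rule bij_affine[OF multiplier_dvd_one[OF params]])
    show "\<sigma> ` H i = H (e * of_nat k * i + c)" for i
      unfolding \<sigma> by (rule bs_map_image_H)
  next
    fix \<pi> assume "bij \<pi> \<and> (\<forall>i. \<sigma> ` H i = H (\<pi> i))"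
    then have "hperm \<sigma> = \<pi>" by (intro hperm_eqI) blast
    then show "\<pi> = (\<lambda>i. e * of_nat k * i + c)" by (simp add: \<sigma> hperm_bs_map)
  qed
qed

lemma bij_betw_hperm_DPhi: "bij_betw hperm {\<sigma>. pp_aut \<sigma>} DPhi"
  unfolding bij_betw_def
proof
  show "inj_on hperm {\<sigma>. pp_aut \<sigma>}"
  proof (rule inj_onI)
    fix \<sigma> \<sigma>' assume "\<sigma> \<in> {\<sigma>. pp_aut \<sigma>}" "\<sigma>' \<in> {\<sigma>. pp_aut \<sigma>}" and eq: "hperm \<sigma> = hperm \<sigma>'"
    then obtain e k c e' k' c' where params: "e \<in> {1, -1}" "k \<in> Kset" "e' \<in> {1, -1}" "k' \<in> Kset"
      and \<sigma>: "\<sigma> = bs_map e k c" and \<sigma>': "\<sigma>' = bs_map e' k' c'"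
      unfolding pp_aut_iff_bs_map by blast
    from eq have "(\<lambda>i. e * of_nat k * i + c) = (\<lambda>i. e' * of_nat k' * i + c')"
      by (simp add: \<sigma> \<sigma>' hperm_bs_map)
    with params have "e = e' \<and> k = k' \<and> c = c'" by (rule affine_params_inject)
    then show "\<sigma> = \<sigma>'" by (simp add: \<sigma> \<sigma>')
  qed
  show "hperm ` {\<sigma>. pp_aut \<sigma>} = DPhi"
  proof (intro equalityI subsetI)
    fix \<pi> assume "\<pi> \<in> hperm ` {\<sigma>. pp_aut \<sigma>}"
    then obtain e k c where "e \<in> {1, -1}" "k \<in> Kset" and "\<pi> = hperm (bs_map e k c)"
      unfolding pp_aut_iff_bs_map by blast
    then have "\<pi> = (\<lambda>i. e * i + c) \<circ> phi k" and "(\<lambda>i. e * i + c) \<in> D17"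
      by (simp_all add: hperm_bs_map dihedral_comp_phi D17I)
    with \<open>k \<in> Kset\<close> show "\<pi> \<in> DPhi" unfolding DPhi_def by blast
  next
    fix \<pi> assume "\<pi> \<in> DPhi"
    then obtain \<alpha> k where "\<alpha> \<in> D17" "k \<in> Kset" and \<pi>: "\<pi> = \<alpha> \<circ> phi k"
      unfolding DPhi_def by blast
    then obtain e c where "e \<in> {1, -1}" and "\<alpha> = (\<lambda>i. e * i + c)" by (elim D17E)
    with \<pi> \<open>k \<in> Kset\<close> have "\<pi> = hperm (bs_map e k c)" and "pp_aut (bs_map e k c)"
      by (simp_all add: hperm_bs_map dihedral_comp_phi pp_aut_bs_map)
    then show "\<pi> \<in> hperm ` {\<sigma>. pp_aut \<sigma>}" by blast
  qed
qed

lemma D17_comp_phi_inject: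
  assumes "\<alpha> \<in> D17" "k \<in> Kset" "\<beta> \<in> D17" "m \<in> Kset" and eq: "\<alpha> \<circ> phi k = \<beta> \<circ> phi m"
  shows "\<alpha> = \<beta> \<and> k = m"
proof -
  obtain e c e' c' where "e \<in> {1, -1}" "e' \<in> {1, -1}"
    and \<alpha>: "\<alpha> = (\<lambda>i. e * i + c)" and \<beta>: "\<beta> = (\<lambda>i. e' * i + c')"
    using assms(1,3) by (elim D17E)
  with eq have "(\<lambda>i. e * of_nat k * i + c) = (\<lambda>i. e' * of_nat m * i + c')"
    by (simp add: dihedral_comp_phi)
  with \<open>e \<in> {1, -1}\<close> \<open>k \<in> Kset\<close> \<open>e' \<in> {1, -1}\<close> \<open>m \<in> Kset\<close>
  have "e = e' \<and> k = m \<and> c = c'" by (rule affine_params_inject)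
  then show ?thesis by (simp add: \<alpha> \<beta>)
qed

lemma DPhi_ex1_decomposition:
  assumes "\<pi> \<in> DPhi"
  shows "\<exists>!(\<alpha>, k). \<alpha> \<in> D17 \<and> k \<in> Kset \<and> \<pi> = \<alpha> \<circ> phi k"
  using assms D17_comp_phi_inject unfolding DPhi_def by blast

lemma pp_aut_image_part:
  assumes "pp_aut \<sigma> \<and> \<alpha> \<in> D17 \<and> k \<in> Kset \<and> hperm \<sigma> = \<alpha> \<circ> phi k"
  shows "\<forall>t. \<sigma> ` part t = part (letter_perm k t)"
proof -
  from assms obtain e' k' c' where "e' \<in> {1, -1}" "k' \<in> Kset" and \<sigma>: "\<sigma> = bs_map e' k' c'"
    unfolding pp_aut_iff_bs_map by blast
  moreover obtain e c where "e \<in> {1, -1}" and "\<alpha> = (\<lambda>i. e * i + c)"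
    using assms by (blast elim: D17E)
  moreover have "hperm \<sigma> = \<alpha> \<circ> phi k" using assms by blast
  ultimately have "(\<lambda>i. e' * of_nat k' * i + c') = (\<lambda>i. e * of_nat k * i + c)"
    by (simp add: hperm_bs_map dihedral_comp_phi)
  then have "k' = k"
    using affine_params_inject \<open>e' \<in> {1, -1}\<close> \<open>k' \<in> Kset\<close> \<open>e \<in> {1, -1}\<close> assms by blast
  with \<sigma> \<open>e' \<in> {1, -1}\<close> \<open>k' \<in> Kset\<close> show ?thesis by (simp add: bs_map_image_part)
qed

theorem propositionA1:
  shows "(\<forall>\<sigma>. pp_aut \<sigma> \<longrightarrow> (\<exists>!\<pi>. bij \<pi> \<and> (\<forall>i. \<sigma> ` H i = H (\<pi> i))))
    \<and> bij_betw hperm {\<sigma>. pp_aut \<sigma>} DPhi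
    \<and> (\<forall>\<pi>\<in>DPhi. \<exists>!(\<alpha>, k). \<alpha> \<in> D17 \<and> k \<in> Kset \<and> \<pi> = \<alpha> \<circ> phi k)
    \<and> (\<forall>\<sigma> \<alpha> k. pp_aut \<sigma> \<and> \<alpha> \<in> D17 \<and> k \<in> Kset \<and> hperm \<sigma> = \<alpha> \<circ> phi k \<longrightarrow>
         (k = 1 \<longrightarrow> (\<forall>t. \<sigma> ` part t = part t))
       \<and> (k = 4 \<longrightarrow> \<sigma> ` part La = part Lb \<and> \<sigma> ` part Lb = part La
                  \<and> \<sigma> ` part Lc = part Ld \<and> \<sigma> ` part Ld = part Lc
                  \<and> \<sigma> ` part Le = part Le \<and> \<sigma> ` part Lf = part Lf)
       \<and> (k \<in> {2, 8} \<longrightarrow> \<sigma> ` part Le = part Lf \<and> \<sigma> ` part Lf = part Le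
                  \<and> \<sigma> ` (part La \<union> part Lb) = part Lc \<union> part Ld
                  \<and> \<sigma> ` (part Lc \<union> part Ld) = part La \<union> part Lb))"
proof (intro conjI allI impI ballI; (elim insertE emptyE)?; (drule pp_aut_image_part)?)
  fix \<sigma> assume "pp_aut \<sigma>"
  then show "\<exists>!\<pi>. bij \<pi> \<and> (\<forall>i. \<sigma> ` H i = H (\<pi> i))" by (rule pp_aut_ex1_H_perm)
next
  show "bij_betw hperm {\<sigma>. pp_aut \<sigma>} DPhi" by (rule bij_betw_hperm_DPhi)
next
  fix \<pi> assume "\<pi> \<in> DPhi"
  then show "\<exists>!(\<alpha>, k). \<alpha> \<in> D17 \<and> k \<in> Kset \<and> \<pi> = \<alpha> \<circ> phi k" by (rule DPhi_ex1_decomposition)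
qed (simp_all add: image_Un letter_perm_def Un_commute)

end
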